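(* Let $R$ be a commutative Artinian ring and $M$ a non-zero $R$-module with two minimal PS-hollow representations $\sum_{i=1}^n N_i=M=\sum_{i=1}^n K_i$, where both $N_i$ and $K_i$ are $H_i$-PS-hollow for each $i\in\{1,\dots,n\}$. If $In(N)$ is PS-hollow whenever $N$ is a main PS-hollow submodule of $M$, then $N_i=K_i$ for all $i\in\{1,\dots,n\}$.
   Context: All rings are commutative with unity. An $R$-submodule $N\leq M$ is PS-hollow iff for every ideal $I\leq R$ and every submodule $L\leq M$: $N\subseteq IM+L$ implies $N\subseteq IM$ or $N\subseteq L$. For a PS-hollow $N\leq M$ put $A_N=\{I\leq R: N\subseteq IM\}$, $H_N$ the set of minimal elements of $A_N$, and $In(N)=\bigcap_{I\in H_N} IM$ ($=M$ if $H_N=\emptyset$). For a set $H$ of ideals, $N$ is $H$-PS-hollow iff $N$ is PS-hollow and $H_N=H$. A minimal PS-hollow representation of $M$ is an expression $M=\sum_{i=1}^n N_i$ with each $N_i$ $H_i$-PS-hollow, such that $In(N_1),\dots,In(N_n)$ are pairwise incomparable and $N_j\not\subseteq\sum_{i\neq j}N_i$ for every $j$. A main PS-hollow submodule of $M$ is a submodule occurring as a summand $N_i$ in some minimal PS-hollow representation of $M$. *)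

theory Defs
  imports "HOL.Modules"
begin

text \<open>The ring R is the whole type 'a (a comm_ring_1); the R-module M is the whole
type 'b (an ab_group_add) with scalar multiplication scale, assumed to satisfy
the module axioms (locale module of HOL.Modules). Submodules of M are the
subspaces of module scale.\<close>

definition ring_ideal :: "'a::comm_ring_1 set \<Rightarrow> bool" where
  "ring_ideal I \<longleftrightarrow> 0 \<in> I \<and> (\<forall>x\<in>I. \<forall>y\<in>I. x + y \<in> I) \<and> (\<forall>r. \<forall>x\<in>I. r * x \<in> I)"

definition artinian_ring :: "'a::comm_ring_1 itself \<Rightarrow> bool" where
  "artinian_ring TYPE('a) \<longleftrightarrow>
     (\<forall>f :: nat \<Rightarrow> 'a set. (\<forall>k. ring_ideal (f k)) \<and> (\<forall>k. f (Suc k) \<subseteq> f k)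
        \<longrightarrow> (\<exists>m. \<forall>k\<ge>m. f k = f m))"

definition ideal_times_module ::
  "('a::comm_ring_1 \<Rightarrow> 'b::ab_group_add \<Rightarrow> 'b) \<Rightarrow> 'a set \<Rightarrow> 'b set" where
  "ideal_times_module scale I = module.span scale {scale a m | a m. a \<in> I}"

definition sm_sum :: "('a::comm_ring_1 \<Rightarrow> 'b::ab_group_add \<Rightarrow> 'b) \<Rightarrow> 'b set \<Rightarrow> 'b set \<Rightarrow> 'b set" where
  "sm_sum scale N L = module.span scale (N \<union> L)"

definition PS_hollow :: "('a::comm_ring_1 \<Rightarrow> 'b::ab_group_add \<Rightarrow> 'b) \<Rightarrow> 'b set \<Rightarrow> bool" where
  "PS_hollow scale N \<longleftrightarrow> module.subspace scale N \<and>
     (\<forall>I L. ring_ideal I \<and> module.subspace scale L \<and>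
        N \<subseteq> sm_sum scale (ideal_times_module scale I) L
        \<longrightarrow> N \<subseteq> ideal_times_module scale I \<or> N \<subseteq> L)"

definition A_set :: "('a::comm_ring_1 \<Rightarrow> 'b::ab_group_add \<Rightarrow> 'b) \<Rightarrow> 'b set \<Rightarrow> 'a set set" where
  "A_set scale N = {I. ring_ideal I \<and> N \<subseteq> ideal_times_module scale I}"

definition H_set :: "('a::comm_ring_1 \<Rightarrow> 'b::ab_group_add \<Rightarrow> 'b) \<Rightarrow> 'b set \<Rightarrow> 'a set set" where
  "H_set scale N = {I \<in> A_set scale N. \<forall>J \<in> A_set scale N. J \<subseteq> I \<longrightarrow> J = I}"

text \<open>In(N): intersection of the I M over the minimal I; equals M = UNIV if there are none.\<close>
definition In_sm :: "('a::comm_ring_1 \<Rightarrow> 'b::ab_group_add \<Rightarrow> 'b) \<Rightarrow> 'b set \<Rightarrow> 'b set" where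
  "In_sm scale N = (\<Inter>I \<in> H_set scale N. ideal_times_module scale I)"

definition H_PS_hollow ::
  "('a::comm_ring_1 \<Rightarrow> 'b::ab_group_add \<Rightarrow> 'b) \<Rightarrow> 'a set set \<Rightarrow> 'b set \<Rightarrow> bool" where
  "H_PS_hollow scale H N \<longleftrightarrow> PS_hollow scale N \<and> H_set scale N = H"

text \<open>Minimal PS-hollow representation M = N_0 + ... + N_(n-1) (indices i < n).
Each N_i is H_i-PS-hollow for H_i = H_set N_i, i.e. simply PS-hollow.\<close>
definition min_PS_rep ::
  "('a::comm_ring_1 \<Rightarrow> 'b::ab_group_add \<Rightarrow> 'b) \<Rightarrow> nat \<Rightarrow> (nat \<Rightarrow> 'b set) \<Rightarrow> bool" where
  "min_PS_rep scale n N \<longleftrightarrow>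
     module.span scale (\<Union>i<n. N i) = UNIV \<and>
     (\<forall>i<n. PS_hollow scale (N i)) \<and>
     (\<forall>i<n. \<forall>j<n. i \<noteq> j \<longrightarrow> \<not> In_sm scale (N i) \<subseteq> In_sm scale (N j)) \<and>
     (\<forall>j<n. \<not> N j \<subseteq> module.span scale (\<Union>i\<in>{..<n} - {j}. N i))"

definition main_PS_hollow :: "('a::comm_ring_1 \<Rightarrow> 'b::ab_group_add \<Rightarrow> 'b) \<Rightarrow> 'b set \<Rightarrow> bool" where
  "main_PS_hollow scale N \<longleftrightarrow> (\<exists>m Ns. min_PS_rep scale m Ns \<and> (\<exists>i<m. Ns i = N))"

end

theory Submission
  imports Defs
begin

text \<open>Let \<open>T = In(N\<^sub>i)\<close>. Since the \<open>In(N\<^sub>j)\<close> are pairwise incomparable, every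
\<open>j \<noteq> i\<close> has a minimal ideal \<open>I\<^sub>j \<in> H(N\<^sub>j)\<close> with \<open>T \<notin> I\<^sub>j M\<close>, while \<open>N\<^sub>j \<subseteq> I\<^sub>j M\<close>.
Hence \<open>T \<subseteq> M = N\<^sub>i + \<Sum>\<^sub>j\<^sub>\<noteq>\<^sub>i I\<^sub>j M\<close>, and PS-hollowness of \<open>T\<close> strips off the summands
\<open>I\<^sub>j M\<close> one at a time, leaving \<open>T \<subseteq> N\<^sub>i\<close>. Thus \<open>N\<^sub>i = In(N\<^sub>i)\<close> depends only on
\<open>H\<^sub>i\<close>, and likewise \<open>K\<^sub>i = In(K\<^sub>i)\<close>.\<close>

lemma subset_In_sm: "N \<subseteq> In_sm scale N"
  unfolding In_sm_def H_set_def A_set_def by blast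

lemma H_set_memD:
  assumes "I \<in> H_set scale N"
  shows "ring_ideal I" and "N \<subseteq> ideal_times_module scale I"
  using assms unfolding H_set_def A_set_def by auto

lemma not_subset_In_smE:
  assumes "\<not> T \<subseteq> In_sm scale N"
  obtains I where "I \<in> H_set scale N" and "\<not> T \<subseteq> ideal_times_module scale I"
  using assms unfolding In_sm_def by blast

lemma main_PS_hollow_if_min_PS_rep:
  assumes "min_PS_rep scale n N" and "i < n"
  shows "main_PS_hollow scale (N i)"
  using assms unfolding main_PS_hollow_def by blast

lemma PS_hollowD:
  assumes "PS_hollow scale N" and "ring_ideal I" and "module.subspace scale L"
    and "N \<subseteq> sm_sum scale (ideal_times_module scale I) L"
  shows "N \<subseteq> ideal_times_module scale I \<or> N \<subseteq> L"
  using assms unfolding PS_hollow_def by blast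

context module
begin

lemma PS_hollow_subset_span_Un_ideal_times_module:
  assumes "PS_hollow scale T" and "finite S" and "subspace L"
    and "\<And>j. j \<in> S \<Longrightarrow> ring_ideal (I j)"
    and "\<And>j. j \<in> S \<Longrightarrow> \<not> T \<subseteq> ideal_times_module scale (I j)"
    and "T \<subseteq> span (L \<union> (\<Union>j\<in>S. ideal_times_module scale (I j)))"
  shows "T \<subseteq> L"
  using assms(2-)
proof (induction S arbitrary: L)
  case empty
  then have "span L = L"
    by simp
  with empty show ?case
    by simp
next
  case (insert j S)
  define L' where "L' = span (L \<union> (\<Union>k\<in>S. ideal_times_module scale (I k)))"
  have "subspace L'"
    unfolding L'_def by simp
  have "L \<union> (\<Union>k\<in>insert j S. ideal_times_module scale (I k))
        \<subseteq> ideal_times_module scale (I j) \<union> L'"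
    using span_superset[of "L \<union> (\<Union>k\<in>S. ideal_times_module scale (I k))"]
    unfolding L'_def by blast
  then have "span (L \<union> (\<Union>k\<in>insert j S. ideal_times_module scale (I k)))
        \<subseteq> sm_sum scale (ideal_times_module scale (I j)) L'"
    unfolding sm_sum_def by (rule span_mono)
  with insert.prems(4) have "T \<subseteq> sm_sum scale (ideal_times_module scale (I j)) L'"
    by (rule order_trans)
  then have "T \<subseteq> ideal_times_module scale (I j) \<or> T \<subseteq> L'"
    by (rule PS_hollowD[OF assms(1) insert.prems(2)[OF insertI1] \<open>subspace L'\<close>])
  with insert.prems(3) have "T \<subseteq> L'"
    by simp
  show ?case
    by (rule insert.IH[OF insert.prems(1) _ _ \<open>T \<subseteq> L'\<close>[unfolded L'_def]])
      (simp_all add: insert.prems(2,3))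
qed

lemma min_PS_rep_In_sm_eq:
  assumes rep: "min_PS_rep scale n N" and "i < n"
    and hollow: "PS_hollow scale (In_sm scale (N i))"
  shows "In_sm scale (N i) = N i"
proof
  let ?T = "In_sm scale (N i)"
  let ?S = "{..<n} - {i}"
  have "\<exists>I. I \<in> H_set scale (N j) \<and> \<not> ?T \<subseteq> ideal_times_module scale I" if "j \<in> ?S" for j
  proof -
    have "\<not> ?T \<subseteq> In_sm scale (N j)"
      using rep \<open>i < n\<close> that unfolding min_PS_rep_def by simp
    then show ?thesis
      by (rule not_subset_In_smE) blast
  qed
  then obtain I where I: "\<And>j. j \<in> ?S \<Longrightarrow> I j \<in> H_set scale (N j)"
    and T_not_in: "\<And>j. j \<in> ?S \<Longrightarrow> \<not> ?T \<subseteq> ideal_times_module scale (I j)"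
    by metis
  have "(\<Union>j<n. N j) \<subseteq> N i \<union> (\<Union>j\<in>?S. ideal_times_module scale (I j))"
    using H_set_memD(2)[OF I] by blast
  then have "span (\<Union>j<n. N j) \<subseteq> span (N i \<union> (\<Union>j\<in>?S. ideal_times_module scale (I j)))"
    by (rule span_mono)
  moreover have "span (\<Union>j<n. N j) = UNIV"
    using rep unfolding min_PS_rep_def by (rule conjunct1)
  ultimately have T_sub: "?T \<subseteq> span (N i \<union> (\<Union>j\<in>?S. ideal_times_module scale (I j)))"
    by (simp add: top_unique)
  have "PS_hollow scale (N i)"
    using rep \<open>i < n\<close> unfolding min_PS_rep_def by simp
  then have "subspace (N i)"
    unfolding PS_hollow_def by (rule conjunct1)
  show "?T \<subseteq> N i"
    by (rule PS_hollow_subset_span_Un_ideal_times_module[OF hollow _ \<open>subspace (N i)\<close>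
          H_set_memD(1)[OF I] T_not_in T_sub]) simp
qed (rule subset_In_sm)

end

theorem corollary5p11:
  fixes scale :: "'a::comm_ring_1 \<Rightarrow> 'b::ab_group_add \<Rightarrow> 'b"
    and n :: nat and N K :: "nat \<Rightarrow> 'b set" and H :: "nat \<Rightarrow> 'a set set"
  assumes "module scale"
    and "artinian_ring TYPE('a)"
    and "\<exists>x::'b. x \<noteq> 0"
    and "min_PS_rep scale n N" and "min_PS_rep scale n K"
    and "\<forall>i<n. H_PS_hollow scale (H i) (N i) \<and> H_PS_hollow scale (H i) (K i)"
    and "\<forall>L. main_PS_hollow scale L \<longrightarrow> PS_hollow scale (In_sm scale L)"
  shows "\<forall>i<n. N i = K i"
proof (intro allI impI)
  fix i assume "i < n"
  interpret module scale by fact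
  have main: "main_PS_hollow scale (N i)" "main_PS_hollow scale (K i)"
    using assms(4,5) \<open>i < n\<close> by (blast intro: main_PS_hollow_if_min_PS_rep)+
  have "N i = In_sm scale (N i)"
    using min_PS_rep_In_sm_eq[OF assms(4) \<open>i < n\<close>] assms(7) main(1) by simp
  also have "\<dots> = In_sm scale (K i)"
    using assms(6) \<open>i < n\<close> unfolding H_PS_hollow_def In_sm_def by simp
  also have "\<dots> = K i"
    using min_PS_rep_In_sm_eq[OF assms(5) \<open>i < n\<close>] assms(7) main(2) by simp
  finally show "N i = K i" .
qed

end
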